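(* Consider two runs $k=1,2$ of the dual opinions dynamics described in the context. Run $k$ takes place on an $(n,n,p_s^{(k)},p_d^{(k)})$-two-island network with groups $V_1,V_2$ and degree of homophily $h^{(k)}=p_s^{(k)}/p_d^{(k)}$, with common resilience $\phi^{(k)}\in(0,1)$, common bias parameter $b^{(k)}>0$, and the symmetric initial condition $x_i^{(k)}(0)=x_0\in(\tfrac12,1)$, $y_i^{(k)}(0)=y_0^{(k)}\in[\tfrac12,x_0]$ for $i\in V_1$ and $x_j^{(k)}(0)=1-x_0$, $y_j^{(k)}(0)=1-y_0^{(k)}$ for $j\in V_2$ (in particular both runs have the same initial implicit opinions). Suppose $y_0^{(1)}>y_0^{(2)}$, $\phi^{(1)}>\phi^{(2)}$, $b^{(1)}>b^{(2)}$ and $h^{(1)}>h^{(2)}$. Then for every $t>0$ and every $i\in V_1$, $$x_i^{(1)}(t)\ge x_i^{(2)}(t)\quad\text{and}\quad y_i^{(1)}(t)\ge y_i^{(2)}(t).$$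
   Context: Let $n\ge 1$ and $p_s,p_d\in(0,1)$ with $p_s>p_d$ and $np_s,np_d$ positive integers. An $(n,n,p_s,p_d)$-two-island network is an undirected graph (no self-loops) with vertex set $V=V_1\cup V_2$, $V_1\cap V_2=\emptyset$, $|V_1|=|V_2|=n$, such that each node of $V_1$ has exactly $np_s$ neighbours in $V_1$ and $np_d$ neighbours in $V_2$, and each node of $V_2$ has exactly $np_s$ neighbours in $V_2$ and $np_d$ neighbours in $V_1$. Its degree of homophily is $p_s/p_d>1$. Let $w_{ij}\in\{0,1\}$ be the adjacency matrix, $N_i$ the set of neighbours of $i$, and $d_i=\sum_{j\in N_i}w_{ij}$. Dual opinions dynamics with parameters $b>0$, $\phi\in(0,1)$: each individual $i\in V$ has an implicit opinion $x_i(t)\in[0,1]$ and an explicit opinion $y_i(t)\in[0,1]$, $t=0,1,2,\dots$, updated by $$x_i(t+1)=\frac{x_i(t)^{b}s_i(t)}{x_i(t)^{b}s_i(t)+(1-x_i(t))^{b}(d_i-s_i(t))},\qquad y_i(t+1)=\phi\, x_i(t+1)+(1-\phi)\hat y_{i,avg}(t),$$ where $s_i(t)=\sum_{j\in N_i}w_{ij}y_j(t)$ and $\hat y_{i,avg}(t)=\sum_{j\in N_i}\frac{w_{ij}}{d_i}y_j(t)$. *)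

theory Defs
  imports Complex_Main
begin

text \<open>Undirected graph on a finite vertex set V given by a 0/1 adjacency relation E
  (E i j means w_ij = 1).\<close>

definition nbrs :: "('a \<Rightarrow> 'a \<Rightarrow> bool) \<Rightarrow> 'a set \<Rightarrow> 'a \<Rightarrow> 'a set" where
  "nbrs E V i = {j \<in> V. E i j}"

definition two_island_network ::
  "nat \<Rightarrow> real \<Rightarrow> real \<Rightarrow> 'a set \<Rightarrow> 'a set \<Rightarrow> ('a \<Rightarrow> 'a \<Rightarrow> bool) \<Rightarrow> bool" where
  "two_island_network n ps pd V1 V2 E \<longleftrightarrow>
     n \<ge> 1 \<and> 0 < pd \<and> pd < ps \<and> ps < 1 \<and>
     (\<exists>m::nat. m > 0 \<and> real n * ps = real m) \<and>
     (\<exists>m::nat. m > 0 \<and> real n * pd = real m) \<and>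
     finite V1 \<and> finite V2 \<and> V1 \<inter> V2 = {} \<and> card V1 = n \<and> card V2 = n \<and>
     (\<forall>i j. E i j \<longrightarrow> i \<in> V1 \<union> V2 \<and> j \<in> V1 \<union> V2) \<and>
     (\<forall>i j. E i j \<longleftrightarrow> E j i) \<and>
     (\<forall>i. \<not> E i i) \<and>
     (\<forall>i\<in>V1. real (card (nbrs E V1 i)) = real n * ps \<and> real (card (nbrs E V2 i)) = real n * pd) \<and>
     (\<forall>i\<in>V2. real (card (nbrs E V2 i)) = real n * ps \<and> real (card (nbrs E V1 i)) = real n * pd)"

text \<open>One step of the dual opinions dynamics on the network (V, E), bias b, resilience phi.
  The state is the pair (x, y) of implicit and explicit opinions.\<close>

definition dual_step ::
  "('a \<Rightarrow> 'a \<Rightarrow> bool) \<Rightarrow> 'a set \<Rightarrow> real \<Rightarrow> real \<Rightarrow>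
   ('a \<Rightarrow> real) \<times> ('a \<Rightarrow> real) \<Rightarrow> ('a \<Rightarrow> real) \<times> ('a \<Rightarrow> real)" where
  "dual_step E V b phi st =
     (let x = fst st; y = snd st;
          s = (\<lambda>i. \<Sum>j\<in>nbrs E V i. y j);
          d = (\<lambda>i. real (card (nbrs E V i)));
          x' = (\<lambda>i. (x i powr b * s i) / (x i powr b * s i + (1 - x i) powr b * (d i - s i)))
      in (x', \<lambda>i. phi * x' i + (1 - phi) * (s i / d i)))"

primrec dual_traj ::
  "('a \<Rightarrow> 'a \<Rightarrow> bool) \<Rightarrow> 'a set \<Rightarrow> real \<Rightarrow> real \<Rightarrow>
   ('a \<Rightarrow> real) \<times> ('a \<Rightarrow> real) \<Rightarrow> nat \<Rightarrow> ('a \<Rightarrow> real) \<times> ('a \<Rightarrow> real)" where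
  "dual_traj E V b phi st0 0 = st0"
| "dual_traj E V b phi st0 (Suc t) = dual_step E V b phi (dual_traj E V b phi st0 t)"

definition sym_init :: "'a set \<Rightarrow> real \<Rightarrow> real \<Rightarrow> ('a \<Rightarrow> real) \<times> ('a \<Rightarrow> real)" where
  "sym_init V1 x0 y0 = ((\<lambda>i. if i \<in> V1 then x0 else 1 - x0), (\<lambda>i. if i \<in> V1 then y0 else 1 - y0))"

end

theory Submission
  imports Defs "HOL-Library.Product_Order"
begin

(* On a two-island network a symmetric state -- opinions (x, y) on V1 and (1 - x, 1 - y) on V2 --
   is mapped by the dynamics to a symmetric state, so each run is governed by a map on the pair
   (x, y) of opinions of V1.  In odds form the implicit update multiplies the odds of the
   neighbour mean q by (x / (1 - x)) powr b, which is at least 1 and increasing in x and b as long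
   as x \<ge> 1/2; the neighbour mean (h y + 1 - y) / (h + 1) is increasing in y and in the
   homophily h for y \<ge> 1/2; and the explicit update q + phi (x' - q) is increasing in phi because
   x' \<ge> q.  Hence the reduced map preserves the square [1/2, 1)\<^sup>2, is monotone there in the
   state and in all parameters, and induction on t compares the two runs. *)

(* The implicit-opinion update of the dual dynamics, with q = s_i / d_i the mean explicit opinion
   of the neighbours. *)
definition bias_update :: "real \<Rightarrow> real \<Rightarrow> real \<Rightarrow> real" where
  "bias_update b x q = x powr b * q / (x powr b * q + (1 - x) powr b * (1 - q))"

(* The probability whose odds are r times the odds q / (1 - q) of q. *)
definition scale_odds :: "real \<Rightarrow> real \<Rightarrow> real" where
  "scale_odds r q = r * q / (r * q + (1 - q))"

lemma scale_odds_1 [simp]: "scale_odds 1 q = q"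
  by (simp add: scale_odds_def)

lemma scale_odds_mono:
  assumes "0 < r'" "r' \<le> r" "0 \<le> q'" "q' \<le> q" "q \<le> 1"
  shows "scale_odds r' q' \<le> scale_odds r q"
proof -
  have pos: "0 < r' * q' + (1 - q')" "0 < r * q + (1 - q)"
    using assms by (smt (verit) mult_nonneg_nonneg mult_pos_pos)+
  have "q' * (1 - q) \<le> q * (1 - q')"
    using assms by (simp add: algebra_simps)
  then have "r' * (q' * (1 - q)) \<le> r * (q * (1 - q'))"
    using assms by (intro mult_mono) auto
  then have "r' * q' * (r * q + (1 - q)) \<le> r * q * (r' * q' + (1 - q'))"
    by (simp add: algebra_simps)
  then show ?thesis
    using pos by (simp add: scale_odds_def divide_simps)
qed

lemma scale_odds_less_1:
  assumes "0 < r" "0 \<le> q" "q < 1"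
  shows "scale_odds r q < 1"
  using assms by (simp add: scale_odds_def divide_simps add_nonneg_pos)

lemma bias_update_eq_scale_odds:
  assumes "0 < x" "x < 1"
  shows "bias_update b x q = scale_odds ((x / (1 - x)) powr b) q"
  using assms by (simp add: bias_update_def scale_odds_def powr_divide field_simps)

lemma bias_update_complement:
  assumes "0 < x" "x < 1" "0 \<le> q" "q \<le> 1"
  shows "bias_update b (1 - x) (1 - q) = 1 - bias_update b x q"
proof -
  have "0 < x powr b * q + (1 - x) powr b * (1 - q)"
    using assms by (smt (verit) mult_nonneg_nonneg mult_pos_pos powr_gt_zero)
  then show ?thesis
    by (simp add: bias_update_def field_simps)
qed

lemma odds_powr_ge_1:
  fixes x b :: real
  assumes "1/2 \<le> x" "x < 1" "0 \<le> b"
  shows "1 \<le> (x / (1 - x)) powr b"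
  using assms by (simp add: ge_one_powr_ge_zero field_simps)

lemma odds_powr_mono:
  fixes x x' b b' :: real
  assumes "1/2 \<le> x'" "x' \<le> x" "x < 1" "0 \<le> b'" "b' \<le> b"
  shows "(x' / (1 - x')) powr b' \<le> (x / (1 - x)) powr b"
proof -
  have "1 \<le> x' / (1 - x')" "x' / (1 - x') \<le> x / (1 - x)"
    using assms by (simp_all add: field_simps)
  then have "(x' / (1 - x')) powr b' \<le> (x' / (1 - x')) powr b"
    "(x' / (1 - x')) powr b \<le> (x / (1 - x)) powr b"
    using assms by (auto intro: powr_mono powr_mono2)
  then show ?thesis by linarith
qed

lemma bias_update_mono:
  assumes "1/2 \<le> x'" "x' \<le> x" "x < 1" "0 \<le> b'" "b' \<le> b" "0 \<le> q'" "q' \<le> q" "q \<le> 1"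
  shows "bias_update b' x' q' \<le> bias_update b x q"
  using assms odds_powr_ge_1[of x' b'] odds_powr_mono[OF assms(1-5)]
  by (simp add: bias_update_eq_scale_odds scale_odds_mono)

lemma bias_update_ge:
  assumes "1/2 \<le> x" "x < 1" "0 \<le> b" "0 \<le> q" "q \<le> 1"
  shows "q \<le> bias_update b x q"
  using scale_odds_mono[of 1 "(x / (1 - x)) powr b" q q] assms odds_powr_ge_1[of x b]
  by (simp add: bias_update_eq_scale_odds)

lemma bias_update_less_1:
  assumes "0 < x" "x < 1" "0 \<le> q" "q < 1"
  shows "bias_update b x q < 1"
  using assms by (simp add: bias_update_eq_scale_odds scale_odds_less_1)

(* Neighbour mean at a node whose own island holds a and the other island c: the weights
   n p_s : n p_d are h : 1 with h = p_s / p_d. *)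
definition homophily_mean :: "real \<Rightarrow> real \<Rightarrow> real \<Rightarrow> real" where
  "homophily_mean h a c = (h * a + c) / (h + 1)"

lemma homophily_mean_complement:
  assumes "0 \<le> h"
  shows "homophily_mean h (1 - y) y = 1 - homophily_mean h y (1 - y)"
  using assms by (simp add: homophily_mean_def field_simps)

lemma homophily_mean_bounds:
  assumes "0 \<le> h" "0 \<le> y" "y \<le> 1"
  shows "0 \<le> homophily_mean h y (1 - y)" "homophily_mean h y (1 - y) \<le> 1"
proof -
  have "0 \<le> h * y + (1 - y)" "h * y + (1 - y) \<le> h + 1"
    using assms mult_left_mono[of y 1 h] mult_nonneg_nonneg[of h y] by linarith+
  then show "0 \<le> homophily_mean h y (1 - y)" "homophily_mean h y (1 - y) \<le> 1"
    using assms by (simp_all add: homophily_mean_def)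
qed

lemma homophily_mean_centred:
  assumes "0 \<le> h"
  shows "homophily_mean h y (1 - y) = 1/2 + (y - 1/2) * (1 - 2 / (h + 1))"
  using assms by (simp add: homophily_mean_def field_simps)

lemma homophily_mean_mono:
  assumes "1 \<le> h'" "h' \<le> h" "1/2 \<le> y'" "y' \<le> y"
  shows "homophily_mean h' y' (1 - y') \<le> homophily_mean h y (1 - y)"
proof -
  have "2 / (h + 1) \<le> 2 / (h' + 1)" "2 / (h' + 1) \<le> 1"
    using assms by (simp_all add: divide_left_mono)
  then have "(y' - 1/2) * (1 - 2 / (h' + 1)) \<le> (y - 1/2) * (1 - 2 / (h + 1))"
    using assms by (intro mult_mono) auto
  then show ?thesis
    using assms by (simp add: homophily_mean_centred)
qed

lemma homophily_mean_ge_half: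
  assumes "1 \<le> h" "1/2 \<le> y"
  shows "1/2 \<le> homophily_mean h y (1 - y)"
  using homophily_mean_mono[of 1 h "1/2" y] assms by (simp add: homophily_mean_def)

lemma homophily_mean_less_1:
  assumes "1 \<le> h" "y < 1"
  shows "homophily_mean h y (1 - y) < 1"
  using assms mult_left_mono[of y 1 "h - 1"] by (simp add: homophily_mean_def field_simps)

lemma dual_step_at:
  fixes st :: "('a \<Rightarrow> real) \<times> ('a \<Rightarrow> real)"
  assumes "0 < card (nbrs E V i)"
  defines "q \<equiv> (\<Sum>j\<in>nbrs E V i. snd st j) / real (card (nbrs E V i))"
  shows "fst (dual_step E V b phi st) i = bias_update b (fst st i) q"
    and "snd (dual_step E V b phi st) i = phi * bias_update b (fst st i) q + (1 - phi) * q"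
proof -
  define d where "d = real (card (nbrs E V i))"
  define x where "x = fst st i"
  have "d \<noteq> 0" using assms by (simp add: d_def)
  then have "(\<Sum>j\<in>nbrs E V i. snd st j) = d * q"
    by (simp add: q_def d_def)
  then have "x powr b * (\<Sum>j\<in>nbrs E V i. snd st j)
      / (x powr b * (\<Sum>j\<in>nbrs E V i. snd st j) + (1 - x) powr b * (d - (\<Sum>j\<in>nbrs E V i. snd st j)))
      = (d * (x powr b * q)) / (d * (x powr b * q + (1 - x) powr b * (1 - q)))"
    by (simp add: algebra_simps)
  also have "\<dots> = bias_update b x q"
    using \<open>d \<noteq> 0\<close> by (simp add: bias_update_def)
  finally show fst: "fst (dual_step E V b phi st) i = bias_update b (fst st i) q"
    by (simp add: dual_step_def Let_def d_def x_def)
  have "snd (dual_step E V b phi st) i = phi * fst (dual_step E V b phi st) i + (1 - phi) * q"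
    by (simp add: dual_step_def Let_def q_def)
  then show "snd (dual_step E V b phi st) i = phi * bias_update b (fst st i) q + (1 - phi) * q"
    by (simp add: fst)
qed

lemma two_island_network_pos:
  assumes "two_island_network n ps pd V1 V2 E"
  shows "0 < real n" "0 < pd" "0 < ps"
  using assms unfolding two_island_network_def by simp_all

lemma two_island_network_swap:
  "two_island_network n ps pd V1 V2 E \<Longrightarrow> two_island_network n ps pd V2 V1 E"
  unfolding two_island_network_def by (simp add: Int_commute Un_commute) blast

lemma two_island_homophily_gt_1:
  "two_island_network n ps pd V1 V2 E \<Longrightarrow> 1 < ps / pd"
  unfolding two_island_network_def by simp

lemma two_island_neighbour_sum:
  fixes f :: "'a \<Rightarrow> real"
  assumes net: "two_island_network n ps pd V1 V2 E" and "i \<in> V1"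
    and "\<forall>j\<in>V1. f j = a" "\<forall>j\<in>V2. f j = c"
  shows "(\<Sum>j\<in>nbrs E (V1 \<union> V2) i. f j) = real n * (ps * a + pd * c)"
proof -
  from net have "finite V1" "finite V2" "V1 \<inter> V2 = {}"
    and card: "real (card (nbrs E V1 i)) = real n * ps" "real (card (nbrs E V2 i)) = real n * pd"
    using \<open>i \<in> V1\<close> unfolding two_island_network_def by simp_all
  then have fin: "finite (nbrs E V1 i)" "finite (nbrs E V2 i)"
    and disj: "nbrs E V1 i \<inter> nbrs E V2 i = {}"
    by (auto simp: nbrs_def)
  have "nbrs E (V1 \<union> V2) i = nbrs E V1 i \<union> nbrs E V2 i"
    by (auto simp: nbrs_def)
  then have "(\<Sum>j\<in>nbrs E (V1 \<union> V2) i. f j) = (\<Sum>j\<in>nbrs E V1 i. f j) + (\<Sum>j\<in>nbrs E V2 i. f j)"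
    by (simp add: sum.union_disjoint[OF fin disj])
  also have "\<dots> = real (card (nbrs E V1 i)) * a + real (card (nbrs E V2 i)) * c"
    using assms(3,4) by (simp add: nbrs_def)
  finally show ?thesis
    by (simp add: card algebra_simps)
qed

lemma two_island_degree:
  assumes "two_island_network n ps pd V1 V2 E" "i \<in> V1"
  shows "real (card (nbrs E (V1 \<union> V2) i)) = real n * (ps + pd)"
  using two_island_neighbour_sum[OF assms, of "\<lambda>_. 1" 1 1] by simp

lemma two_island_neighbour_mean:
  fixes f :: "'a \<Rightarrow> real"
  assumes net: "two_island_network n ps pd V1 V2 E" and "i \<in> V1"
    and "\<forall>j\<in>V1. f j = a" "\<forall>j\<in>V2. f j = c"
  shows "(\<Sum>j\<in>nbrs E (V1 \<union> V2) i. f j) / real (card (nbrs E (V1 \<union> V2) i))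
           = homophily_mean (ps / pd) a c"
proof -
  have "real n > 0" "pd > 0" "ps > 0"
    using two_island_network_pos[OF net] .
  then have "homophily_mean (ps / pd) a c = ((ps * a + pd * c) / pd) / ((ps + pd) / pd)"
    by (simp add: homophily_mean_def add_divide_distrib)
  then show ?thesis
    using two_island_neighbour_sum[OF assms] two_island_degree[OF net \<open>i \<in> V1\<close>] \<open>real n > 0\<close> \<open>pd > 0\<close>
    by simp
qed

definition symmetric_state ::
  "'a set \<Rightarrow> 'a set \<Rightarrow> real \<times> real \<Rightarrow> ('a \<Rightarrow> real) \<times> ('a \<Rightarrow> real) \<Rightarrow> bool" where
  "symmetric_state V1 V2 p st \<longleftrightarrow>
     (\<forall>j\<in>V1. fst st j = fst p \<and> snd st j = snd p) \<and>
     (\<forall>j\<in>V2. fst st j = 1 - fst p \<and> snd st j = 1 - snd p)"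

lemma symmetric_state_swap:
  "symmetric_state V1 V2 (x, y) st \<longleftrightarrow> symmetric_state V2 V1 (1 - x, 1 - y) st"
  by (auto simp: symmetric_state_def)

lemma symmetric_state_sym_init:
  "V1 \<inter> V2 = {} \<Longrightarrow> symmetric_state V1 V2 (x0, y0) (sym_init V1 x0 y0)"
  by (auto simp: symmetric_state_def sym_init_def)

definition symmetric_step :: "real \<Rightarrow> real \<Rightarrow> real \<Rightarrow> real \<times> real \<Rightarrow> real \<times> real" where
  "symmetric_step b phi h = (\<lambda>(x, y). let q = homophily_mean h y (1 - y)
     in (bias_update b x q, phi * bias_update b x q + (1 - phi) * q))"

lemma symmetric_step_complement:
  assumes "0 < x" "x < 1" "0 \<le> y" "y \<le> 1" "0 \<le> h"
  shows "symmetric_step b phi h (1 - x, 1 - y)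
           = (1 - fst (symmetric_step b phi h (x, y)), 1 - snd (symmetric_step b phi h (x, y)))"
proof -
  define q where "q = homophily_mean h y (1 - y)"
  have q: "homophily_mean h (1 - y) y = 1 - q"
    using homophily_mean_complement[OF assms(5)] by (simp add: q_def)
  have F: "bias_update b (1 - x) (1 - q) = 1 - bias_update b x q"
    using assms homophily_mean_bounds[OF assms(5,3,4)] by (intro bias_update_complement) (auto simp: q_def)
  show ?thesis
    by (simp add: symmetric_step_def Let_def q F flip: q_def) (simp add: algebra_simps)
qed

lemma dual_step_symmetric_state_at:
  assumes net: "two_island_network n ps pd V1 V2 E"
    and st: "symmetric_state V1 V2 (x, y) st" and "i \<in> V1"
  shows "fst (dual_step E (V1 \<union> V2) b phi st) i = fst (symmetric_step b phi (ps / pd) (x, y))"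
    "snd (dual_step E (V1 \<union> V2) b phi st) i = snd (symmetric_step b phi (ps / pd) (x, y))"
proof -
  have "0 < real n * (ps + pd)"
    using two_island_network_pos[OF net] by simp
  then have deg: "0 < card (nbrs E (V1 \<union> V2) i)"
    using two_island_degree[OF net \<open>i \<in> V1\<close>] by simp
  have mean: "(\<Sum>j\<in>nbrs E (V1 \<union> V2) i. snd st j) / real (card (nbrs E (V1 \<union> V2) i))
      = homophily_mean (ps / pd) y (1 - y)"
    using st by (intro two_island_neighbour_mean[OF net \<open>i \<in> V1\<close>]) (auto simp: symmetric_state_def)
  have x: "fst st i = x"
    using st \<open>i \<in> V1\<close> by (simp add: symmetric_state_def)
  show "fst (dual_step E (V1 \<union> V2) b phi st) i = fst (symmetric_step b phi (ps / pd) (x, y))"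
    "snd (dual_step E (V1 \<union> V2) b phi st) i = snd (symmetric_step b phi (ps / pd) (x, y))"
    unfolding dual_step_at[OF deg] mean x by (simp_all add: symmetric_step_def Let_def)
qed

lemma dual_step_symmetric_state:
  assumes net: "two_island_network n ps pd V1 V2 E"
    and st: "symmetric_state V1 V2 (x, y) st"
    and "0 < x" "x < 1" "0 \<le> y" "y \<le> 1"
  shows "symmetric_state V1 V2 (symmetric_step b phi (ps / pd) (x, y)) (dual_step E (V1 \<union> V2) b phi st)"
proof -
  have "0 \<le> ps / pd"
    using two_island_homophily_gt_1[OF net] by simp
  then have compl: "symmetric_step b phi (ps / pd) (1 - x, 1 - y)
      = (1 - fst (symmetric_step b phi (ps / pd) (x, y)), 1 - snd (symmetric_step b phi (ps / pd) (x, y)))"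
    using assms(3-) by (intro symmetric_step_complement)
  note on_V1 = dual_step_symmetric_state_at[OF net st]
  note on_V2 = dual_step_symmetric_state_at[OF two_island_network_swap[OF net]
      symmetric_state_swap[THEN iffD1, OF st], unfolded Un_commute[of V2]]
  show ?thesis
    unfolding symmetric_state_def using on_V1 on_V2 compl by simp
qed

lemma funpow_mem:
  assumes "\<And>x. x \<in> S \<Longrightarrow> f x \<in> S" "x \<in> S"
  shows "(f ^^ n) x \<in> S"
  using assms by (induction n) auto

lemma funpow_le_funpow:
  fixes f g :: "'a \<Rightarrow> 'a::ord"
  assumes "\<And>x. x \<in> S \<Longrightarrow> f x \<in> S" "\<And>x. x \<in> S \<Longrightarrow> g x \<in> S"
    and le: "\<And>x y. x \<in> S \<Longrightarrow> y \<in> S \<Longrightarrow> x \<le> y \<Longrightarrow> f x \<le> g y"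
    and "x \<in> S" "y \<in> S" "x \<le> y"
  shows "(f ^^ n) x \<le> (g ^^ n) y"
proof (induction n)
  case 0
  then show ?case using \<open>x \<le> y\<close> by simp
next
  case (Suc n)
  then show ?case using le funpow_mem[OF assms(1,4)] funpow_mem[OF assms(2,5)] by simp
qed

lemma symmetric_step_region:
  assumes "0 \<le> b" "0 \<le> phi" "phi \<le> 1" "1 \<le> h" "p \<in> {1/2..<1} \<times> {1/2..<1}"
  shows "symmetric_step b phi h p \<in> {1/2..<1} \<times> {1/2..<1}"
proof -
  obtain x y where p: "p = (x, y)" by fastforce
  with assms(5) have x: "1/2 \<le> x" "x < 1" and y: "1/2 \<le> y" "y < 1" by auto
  define q where "q = homophily_mean h y (1 - y)"
  have q: "1/2 \<le> q" "q < 1"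
    using homophily_mean_ge_half homophily_mean_less_1 assms y by (auto simp: q_def)
  then have "q \<le> bias_update b x q" "bias_update b x q < 1"
    using bias_update_ge bias_update_less_1 x assms by auto
  moreover have "phi * q \<le> phi * bias_update b x q"
    using \<open>q \<le> bias_update b x q\<close> assms by (intro mult_left_mono)
  ultimately have "1/2 \<le> phi * bias_update b x q + (1 - phi) * q"
    using q by (simp add: algebra_simps)
  moreover have "phi * bias_update b x q + (1 - phi) * q < 1"
    using \<open>bias_update b x q < 1\<close> q assms by (intro convex_bound_lt) auto
  ultimately show ?thesis
    using \<open>q \<le> bias_update b x q\<close> \<open>bias_update b x q < 1\<close> q p
    by (simp add: symmetric_step_def Let_def q_def[symmetric])
qed

lemma symmetric_step_mono:
  assumes "0 \<le> b'" "b' \<le> b" "0 \<le> phi'" "phi' \<le> phi" "phi \<le> 1" "1 \<le> h'" "h' \<le> h"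
    and "p' \<in> {1/2..<1} \<times> {1/2..<1}" "p \<in> {1/2..<1} \<times> {1/2..<1}" "p' \<le> p"
  shows "symmetric_step b' phi' h' p' \<le> symmetric_step b phi h p"
proof -
  obtain x' y' x y where p: "p' = (x', y')" "p = (x, y)" by fastforce
  then have x: "1/2 \<le> x'" "x' \<le> x" "x < 1" and y: "1/2 \<le> y'" "y' \<le> y" "y < 1"
    using assms(8-10) by auto
  define q' q where "q' = homophily_mean h' y' (1 - y')" and "q = homophily_mean h y (1 - y)"
  define F' F where "F' = bias_update b' x' q'" and "F = bias_update b x q"
  have q: "1/2 \<le> q'" "q' \<le> q" "q < 1"
    using homophily_mean_ge_half homophily_mean_mono homophily_mean_less_1 assms y
    by (auto simp: q'_def q_def)
  then have "F' \<le> F" "q \<le> F"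
    using bias_update_mono[OF x(1-3) assms(1,2)] bias_update_ge[of x b q] x y assms
    by (auto simp: F'_def F_def)
  have "phi' * F' + (1 - phi') * q' \<le> phi' * F + (1 - phi') * q"
    using \<open>F' \<le> F\<close> q assms by (intro add_mono mult_left_mono) auto
  also have "\<dots> = q + phi' * (F - q)"
    by (simp add: algebra_simps)
  also have "\<dots> \<le> q + phi * (F - q)"
    using \<open>q \<le> F\<close> assms by (simp add: mult_right_mono)
  also have "\<dots> = phi * F + (1 - phi) * q"
    by (simp add: algebra_simps)
  finally show ?thesis
    using \<open>F' \<le> F\<close> p by (simp add: symmetric_step_def Let_def flip: q'_def q_def F'_def F_def)
qed

lemma symmetric_step_funpow_mono:
  assumes "0 \<le> b'" "b' \<le> b" "0 \<le> phi'" "phi' \<le> phi" "phi \<le> 1" "1 \<le> h'" "h' \<le> h"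
    and "p' \<in> {1/2..<1} \<times> {1/2..<1}" "p \<in> {1/2..<1} \<times> {1/2..<1}" "p' \<le> p"
  shows "(symmetric_step b' phi' h' ^^ t) p' \<le> (symmetric_step b phi h ^^ t) p"
proof (rule funpow_le_funpow[where S = "{1/2..<1} \<times> {1/2..<1}"])
  show "symmetric_step b' phi' h' x \<in> {1/2..<1} \<times> {1/2..<1}"
    "symmetric_step b phi h x \<in> {1/2..<1} \<times> {1/2..<1}"
    if "x \<in> {1/2..<1} \<times> {1/2..<1}" for x
    using that assms(1-7) by (auto intro!: symmetric_step_region)
  show "symmetric_step b' phi' h' x \<le> symmetric_step b phi h y"
    if "x \<in> {1/2..<1} \<times> {1/2..<1}" "y \<in> {1/2..<1} \<times> {1/2..<1}" "x \<le> y" for x y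
    using that assms(1-7) by (intro symmetric_step_mono) auto
qed (use assms(8-10) in auto)

lemma dual_traj_symmetric_state:
  assumes net: "two_island_network n ps pd V1 V2 E"
    and "0 \<le> b" "0 \<le> phi" "phi \<le> 1" and init: "(x0, y0) \<in> {1/2..<1} \<times> {1/2..<1}"
  shows "symmetric_state V1 V2 ((symmetric_step b phi (ps / pd) ^^ t) (x0, y0))
           (dual_traj E (V1 \<union> V2) b phi (sym_init V1 x0 y0) t)"
proof (induction t)
  case 0
  show ?case
    using net unfolding two_island_network_def by (simp add: symmetric_state_sym_init)
next
  case (Suc t)
  obtain x y where p: "(symmetric_step b phi (ps / pd) ^^ t) (x0, y0) = (x, y)" by fastforce
  have "(x, y) \<in> {1/2..<1} \<times> {1/2..<1}"
    unfolding p[symmetric]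
    using symmetric_step_region[OF assms(2-4) less_imp_le[OF two_island_homophily_gt_1[OF net]]] init
    by (rule funpow_mem)
  then show ?case
    using dual_step_symmetric_state[OF net Suc.IH[unfolded p]] p by auto
qed

theorem theorem5:
  fixes n :: nat and V1 V2 :: "'a set" and E1 E2 :: "'a \<Rightarrow> 'a \<Rightarrow> bool"
    and ps1 pd1 ps2 pd2 phi1 phi2 b1 b2 x0 y01 y02 :: real
  assumes net1: "two_island_network n ps1 pd1 V1 V2 E1"
    and net2: "two_island_network n ps2 pd2 V1 V2 E2"
    and phi1: "0 < phi1" "phi1 < 1" and phi2: "0 < phi2" "phi2 < 1"
    and b1: "b1 > 0" and b2: "b2 > 0"
    and x0: "1/2 < x0" "x0 < 1"
    and y01: "1/2 \<le> y01" "y01 \<le> x0"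
    and y02: "1/2 \<le> y02" "y02 \<le> x0"
    and y_gt: "y01 > y02"
    and phi_gt: "phi1 > phi2"
    and b_gt: "b1 > b2"
    and h_gt: "ps1 / pd1 > ps2 / pd2"
    and t: "t > (0::nat)"
    and i: "i \<in> V1"
  shows "fst (dual_traj E1 (V1 \<union> V2) b1 phi1 (sym_init V1 x0 y01) t) i
           \<ge> fst (dual_traj E2 (V1 \<union> V2) b2 phi2 (sym_init V1 x0 y02) t) i
       \<and> snd (dual_traj E1 (V1 \<union> V2) b1 phi1 (sym_init V1 x0 y01) t) i
           \<ge> snd (dual_traj E2 (V1 \<union> V2) b2 phi2 (sym_init V1 x0 y02) t) i"
proof -
  have h: "1 \<le> ps2 / pd2" "ps2 / pd2 \<le> ps1 / pd1"
    using two_island_homophily_gt_1[OF net2] h_gt by auto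
  have init: "(x0, y01) \<in> {1/2..<1} \<times> {1/2..<1}" "(x0, y02) \<in> {1/2..<1} \<times> {1/2..<1}"
    using x0 y01 y02 by auto
  have "(symmetric_step b2 phi2 (ps2 / pd2) ^^ t) (x0, y02)
          \<le> (symmetric_step b1 phi1 (ps1 / pd1) ^^ t) (x0, y01)"
    using h init phi1 phi2 b1 b2 phi_gt b_gt y_gt by (intro symmetric_step_funpow_mono) auto
  moreover have "symmetric_state V1 V2 ((symmetric_step b1 phi1 (ps1 / pd1) ^^ t) (x0, y01))
      (dual_traj E1 (V1 \<union> V2) b1 phi1 (sym_init V1 x0 y01) t)"
    using phi1 b1 init by (intro dual_traj_symmetric_state[OF net1]) auto
  moreover have "symmetric_state V1 V2 ((symmetric_step b2 phi2 (ps2 / pd2) ^^ t) (x0, y02))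
      (dual_traj E2 (V1 \<union> V2) b2 phi2 (sym_init V1 x0 y02) t)"
    using phi2 b2 init by (intro dual_traj_symmetric_state[OF net2]) auto
  ultimately show ?thesis
    using i by (simp add: symmetric_state_def less_eq_prod_def)
qed

end
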